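(* Let $p_1>p_2$ be relatively prime positive integers and $c\in[0,1]$. Write the first $p_1+p_2$ terms of $S_c(p_1,p_2)$ as $1^{k_1},2,1^{k_2},2,\dots,1^{k_{p_2}},2,1^{p_1-(k_1+\cdots+k_{p_2})}$. Then $p_1=k_1+\cdots+k_{p_2}$ (that is, the period ends with a $2$) if and only if $c=1$.
   Context: Stationary divisor method with cut point $c\in[0,1]$ for votes $(p_1,p_2)$: seats are allocated one at a time. Initially $a_1=a_2=0$; each next seat goes to a party $i$ maximizing $p_i/(a_i+c)$, whose $a_i$ then increases by $1$. Ties are broken in favor of party $1$. For $c=0$ the convention is that $p_1/0>p_2/0$, and $p_i/0>p_j/k$ for $k>0$. $S_c(p_1,p_2)$ is the infinite sequence of party labels (in $\{1,2\}$) of successive seats. It is periodic with period $p_1+p_2$, with $p_1$ ones and $p_2$ twos per period. The notation $1^k$ denotes $k$ consecutive $1$'s. *)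

theory Defs
  imports Complex_Main
begin

text \<open>Stationary divisor method with cut point c for two parties with votes p1, p2.
  The priority of a party with votes p and a seats is p/(a+c); when a + c = 0 the
  priority is treated as +infinity, and infinite priorities are ordered with party 1 first.\<close>

definition next_is_1 :: "real \<Rightarrow> nat \<Rightarrow> nat \<Rightarrow> nat \<times> nat \<Rightarrow> bool" where
  "next_is_1 c p1 p2 a =
     (if real (fst a) + c = 0 then True
      else if real (snd a) + c = 0 then False
      else real p2 / (real (snd a) + c) \<le> real p1 / (real (fst a) + c))"

primrec alloc :: "real \<Rightarrow> nat \<Rightarrow> nat \<Rightarrow> nat \<Rightarrow> nat \<times> nat" where
  "alloc c p1 p2 0 = (0, 0)"
| "alloc c p1 p2 (Suc n) =
     (let a = alloc c p1 p2 n in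
      if next_is_1 c p1 p2 a then (fst a + 1, snd a) else (fst a, snd a + 1))"

text \<open>The sequence S_c(p1,p2), indexed from 0: S c p1 p2 n is the party label (1 or 2)
  of the (n+1)-th seat.\<close>
definition S :: "real \<Rightarrow> nat \<Rightarrow> nat \<Rightarrow> nat \<Rightarrow> nat" where
  "S c p1 p2 n = (if next_is_1 c p1 p2 (alloc c p1 p2 n) then 1 else 2)"

end

theory Submission
  imports Defs
begin

text \<open>Seat allocation is governed by the imbalance D = p2 a1 - p1 a2: party 1 receives
  the next seat iff D \<le> T with T = c (p1 - p2), and then D grows by p2, otherwise it drops
  by p1. Hence D stays in the window (T - p1, T + p2], of length p1 + p2, which contains 0.
  After p1 + p2 seats D is a multiple of p1 + p2, so D = 0 and the allocation is exactly
  (p1, p2). The last seat went to party 2 iff the previous state was (p1, p2 - 1), i.e.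
  D = p1 was still in the window, which means T \<ge> p1 - p2, i.e. c = 1.\<close>

definition imbalance :: "nat \<Rightarrow> nat \<Rightarrow> nat \<times> nat \<Rightarrow> real" where
  "imbalance p1 p2 a = real p2 * real (fst a) - real p1 * real (snd a)"

lemma alloc_sum: "fst (alloc c p1 p2 n) + snd (alloc c p1 p2 n) = n"
  by (induction n) (auto simp: Let_def)

lemma alloc_Suc_eq:
  "alloc c p1 p2 (Suc n) =
     (let a = alloc c p1 p2 n in
      if S c p1 p2 n = 1 then (fst a + 1, snd a) else (fst a, snd a + 1))"
  by (simp add: S_def Let_def)

lemma next_is_1_iff_imbalance:
  assumes "0 < p1" "0 < p2" "0 \<le> c"
  shows "next_is_1 c p1 p2 a \<longleftrightarrow> imbalance p1 p2 a \<le> c * (real p1 - real p2)"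
proof -
  have "next_is_1 c p1 p2 a \<longleftrightarrow> real p2 * (real (fst a) + c) \<le> real p1 * (real (snd a) + c)"
  proof (cases "real (fst a) + c = 0 \<or> real (snd a) + c = 0")
    case True
    then have "c = 0" using assms(3) by auto
    then show ?thesis using True assms(1,2) unfolding next_is_1_def by (auto simp: mult_le_0_iff)
  next
    case False
    then have "real (fst a) + c > 0" "real (snd a) + c > 0" using assms(3) by auto
    then show ?thesis using False unfolding next_is_1_def
      by (simp add: divide_le_eq le_divide_eq field_simps)
  qed
  then show ?thesis unfolding imbalance_def by (simp add: algebra_simps)
qed

lemma cut_offset_bounds:
  assumes "0 < p1" "0 < p2" "0 \<le> c" "c \<le> 1"
  shows "- real p2 \<le> c * (real p1 - real p2)" "c * (real p1 - real p2) < real p1"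
proof -
  have "c * real p1 \<le> real p1" "c * real p2 \<le> real p2"
    using assms by (simp_all add: mult_left_le_one_le)
  moreover have "0 \<le> c * real p1" "0 \<le> c * real p2" using assms by simp_all
  moreover have "c * real p1 < real p1 \<or> 0 < c * real p2" using assms by (cases "c = 0") auto
  ultimately show "- real p2 \<le> c * (real p1 - real p2)" "c * (real p1 - real p2) < real p1"
    by (simp_all add: right_diff_distrib) linarith
qed

lemma alloc_imbalance_bounds:
  assumes "0 < p1" "0 < p2" "0 \<le> c" "c \<le> 1"
  shows "c * (real p1 - real p2) - real p1 < imbalance p1 p2 (alloc c p1 p2 n)
       \<and> imbalance p1 p2 (alloc c p1 p2 n) \<le> c * (real p1 - real p2) + real p2"
proof (induction n)
  case 0
  show ?case using cut_offset_bounds[OF assms] by (simp add: imbalance_def)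
next
  case (Suc n)
  then show ?case
    using next_is_1_iff_imbalance[OF assms(1-3), of "alloc c p1 p2 n"]
    by (auto simp: Let_def imbalance_def algebra_simps)
qed

lemma alloc_period:
  assumes "0 < p1" "0 < p2" "0 \<le> c" "c \<le> 1"
  shows "alloc c p1 p2 (p1 + p2) = (p1, p2)"
proof -
  obtain x y where xy: "alloc c p1 p2 (p1 + p2) = (x, y)" by fastforce
  have "x + y = p1 + p2" using alloc_sum[of c p1 p2 "p1 + p2"] xy by simp
  then have y: "real y = real p1 + real p2 - real x" by (metis add_diff_cancel_left' of_nat_add)
  have "imbalance p1 p2 (x, y) = (real p1 + real p2) * (real x - real p1)"
    unfolding imbalance_def fst_conv snd_conv y by (simp add: algebra_simps)
  moreover have "(real p1 + real p2) * - 1 < imbalance p1 p2 (x, y)"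
    "imbalance p1 p2 (x, y) < (real p1 + real p2) * 1"
    using alloc_imbalance_bounds[OF assms, of "p1 + p2"] cut_offset_bounds[OF assms] xy
    by auto
  moreover have "0 < real p1 + real p2" using assms(1) by simp
  ultimately have "- 1 < real x - real p1" "real x - real p1 < 1"
    by (metis mult_less_cancel_left_pos)+
  then have "x = p1" by linarith
  with \<open>x + y = p1 + p2\<close> xy show ?thesis by simp
qed

lemma alloc_before_period:
  assumes "0 < p1" "0 < p2" "0 \<le> c" "c \<le> 1"
  shows "alloc c p1 p2 (p1 + p2 - 1) =
           (if S c p1 p2 (p1 + p2 - 1) = 1 then (p1 - 1, p2) else (p1, p2 - 1))"
proof -
  obtain u v where uv: "alloc c p1 p2 (p1 + p2 - 1) = (u, v)" by fastforce
  have "alloc c p1 p2 (Suc (p1 + p2 - 1)) = (p1, p2)"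
    using alloc_period[OF assms] assms(1) by simp
  then have "(if S c p1 p2 (p1 + p2 - 1) = 1 then (u + 1, v) else (u, v + 1)) = (p1, p2)"
    by (simp only: alloc_Suc_eq uv Let_def fst_conv snd_conv)
  then show ?thesis using uv by (auto split: if_splits)
qed

theorem mainTheorem12:
  fixes p1 p2 :: nat and c :: real
  assumes "0 < p2" and "p2 < p1" and "coprime p1 p2"
    and "0 \<le> c" and "c \<le> 1"
  shows "S c p1 p2 (p1 + p2 - 1) = 2 \<longleftrightarrow> c = 1"
proof -
  let ?m = "p1 + p2 - 1"
  have pos: "0 < p1" "0 < p2" using assms(1,2) by simp_all
  have bounds: "c * (real p1 - real p2) - real p1 < imbalance p1 p2 (alloc c p1 p2 ?m)"
    "imbalance p1 p2 (alloc c p1 p2 ?m) \<le> c * (real p1 - real p2) + real p2"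
    using alloc_imbalance_bounds[OF pos assms(4,5)] by auto
  consider "S c p1 p2 ?m = 1" | "S c p1 p2 ?m = 2" unfolding S_def by argo
  then show ?thesis
  proof cases
    case 1
    then have "imbalance p1 p2 (alloc c p1 p2 ?m) = - real p2"
      using alloc_before_period[OF pos assms(4,5)] pos
      by (simp add: imbalance_def of_nat_diff algebra_simps)
    then show ?thesis using bounds(1) 1 by auto
  next
    case 2
    then have "imbalance p1 p2 (alloc c p1 p2 ?m) = real p1"
      using alloc_before_period[OF pos assms(4,5)] pos
      by (simp add: imbalance_def of_nat_diff algebra_simps)
    then have "real p1 - real p2 \<le> c * (real p1 - real p2)" using bounds(2) by linarith
    then show ?thesis using assms(2,5) 2 by simp
  qed
qed

end
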